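(* Let $R$ be a von Neumann regular ring with $\omega(\Gamma'(R))<\infty$. Then $R\cong F_1\times\cdots\times F_n$ where each $F_i$ is a field and $n=|\mathrm{Min}(R)|$.
   Context: All rings are commutative with identity $1\ne 0$. $W^*(R)$ denotes the set of non-zero non-unit elements of $R$. The cozero-divisor graph $\Gamma'(R)$ is the simple graph with vertex set $W^*(R)$, in which distinct $a,b$ are adjacent iff $a\notin Rb$ and $b\notin Ra$. A ring $R$ is von Neumann regular if for every $r\in R$ there is $s\in R$ with $r=r^2s$. $\mathrm{Min}(R)$ is the set of minimal prime ideals of $R$. $\omega(G)$ is the clique number of $G$. *)

theory Defs
  imports "HOL-Algebra.Algebra" "HOL-Library.Extended_Nat"
begin

definition nonzero_nonunits :: "('a, 'm) ring_scheme \<Rightarrow> 'a set" where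
  "nonzero_nonunits R = {a \<in> carrier R. a \<noteq> \<zero>\<^bsub>R\<^esub> \<and> a \<notin> Units R}"

definition cozero_adj :: "('a, 'm) ring_scheme \<Rightarrow> 'a \<Rightarrow> 'a \<Rightarrow> bool" where
  "cozero_adj R a b \<longleftrightarrow> a \<in> nonzero_nonunits R \<and> b \<in> nonzero_nonunits R \<and> a \<noteq> b
     \<and> a \<notin> PIdl\<^bsub>R\<^esub> b \<and> b \<notin> PIdl\<^bsub>R\<^esub> a"

definition cozero_clique :: "('a, 'm) ring_scheme \<Rightarrow> 'a set \<Rightarrow> bool" where
  "cozero_clique R S \<longleftrightarrow> S \<subseteq> nonzero_nonunits R \<and>
     (\<forall>a\<in>S. \<forall>b\<in>S. a \<noteq> b \<longrightarrow> cozero_adj R a b)"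

definition cozero_clique_number :: "('a, 'm) ring_scheme \<Rightarrow> enat" where
  "cozero_clique_number R =
     (if \<exists>S. cozero_clique R S \<and> infinite S then \<infinity>
      else Sup {enat (card S) | S. cozero_clique R S})"

definition von_neumann_regular :: "('a, 'm) ring_scheme \<Rightarrow> bool" where
  "von_neumann_regular R \<longleftrightarrow>
     (\<forall>r\<in>carrier R. \<exists>s\<in>carrier R. r = r \<otimes>\<^bsub>R\<^esub> r \<otimes>\<^bsub>R\<^esub> s)"

definition min_primes :: "('a, 'm) ring_scheme \<Rightarrow> 'a set set" where
  "min_primes R = {P. primeideal P R \<and> (\<forall>Q. primeideal Q R \<and> Q \<subseteq> P \<longrightarrow> Q = P)}"

end

theory Submission
  imports Defs
begin

text \<open>In a von Neumann regular ring every principal ideal is generated by an idempotent. Hence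
  every prime ideal is maximal, so that Min(R) is the set of maximal ideals, and the maximal
  ideals intersect in zero. For finitely many distinct maximal ideals M, prime avoidance gives
  elements x_M lying in all of them except M; no x_M is a multiple of another, so they form a
  clique of the cozero-divisor graph. A finite clique number therefore bounds the number of
  maximal ideals, and the Chinese remainder theorem identifies R with the product of its
  residue fields.\<close>

lemma (in ring) ex_maximalideal_superset:
  assumes J: "ideal J R" and one: "\<one> \<notin> J"
  shows "\<exists>M. maximalideal M R \<and> J \<subseteq> M"
proof -
  define A where "A = {I. ideal I R \<and> J \<subseteq> I \<and> \<one> \<notin> I}"
  have "\<exists>M\<in>A. \<forall>Y\<in>A. M \<subseteq> Y \<longrightarrow> Y = M"
  proof (rule subset_Zorn_nonempty)
    show "A \<noteq> {}" using J one unfolding A_def by blast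
  next
    fix C assume C: "C \<noteq> {}" "subset.chain A C"
    have "subset.chain {I. ideal I R} C" using C(2) unfolding subset_chain_def A_def by blast
    from chain_Union_is_ideal[OF this] C(1) have "ideal (\<Union>C) R" by simp
    then show "\<Union>C \<in> A" using C unfolding subset_chain_def A_def by blast
  qed
  then obtain M where M: "M \<in> A" and M_max: "\<forall>Y\<in>A. M \<subseteq> Y \<longrightarrow> Y = M" by blast
  have "maximalideal M R"
  proof (rule maximalidealI)
    show "ideal M R" and "carrier R \<noteq> M" using M unfolding A_def by blast+
    fix J' assume "ideal J' R" "M \<subseteq> J'" "J' \<subseteq> carrier R"
    then show "J' = M \<or> J' = carrier R"
      using M_max M ideal.one_imp_carrier unfolding A_def by blast
  qed
  then show ?thesis using M unfolding A_def by blast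
qed

lemma (in ring) ex_maximalideal:
  assumes "\<one> \<noteq> \<zero>"
  shows "\<exists>M. maximalideal M R"
  using ex_maximalideal_superset[OF zeroideal] assms by blast

lemma (in ideal) Units_in_imp_carrier:
  assumes "u \<in> Units R" and "u \<in> I"
  shows "I = carrier R"
proof (rule one_imp_carrier)
  have "inv u \<otimes> u \<in> I" using I_l_closed assms Units_inv_closed by blast
  then show "\<one> \<in> I" using Units_l_inv[OF assms(1)] by simp
qed

lemma (in ideal) mem_and_one_minus_imp_carrier:
  assumes "x \<in> I" and "\<one> \<ominus> x \<in> I"
  shows "I = carrier R"
proof (rule one_imp_carrier)
  have "(\<one> \<ominus> x) \<oplus> x \<in> I" using assms a_closed by blast
  moreover have "(\<one> \<ominus> x) \<oplus> x = \<one>" using Icarr[OF assms(1)] by (simp add: minus_eq a_assoc l_neg)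
  ultimately show "\<one> \<in> I" by simp
qed

lemma maximalideal_subset_imp_eq:
  assumes "maximalideal M R" "maximalideal N R" "M \<subseteq> N"
  shows "M = N"
  using maximalideal.I_maximal[OF assms(1) maximalideal.axioms(1)[OF assms(2)] assms(3)]
    ideal.Icarr[OF maximalideal.axioms(1)[OF assms(2)]] maximalideal.I_notcarr[OF assms(2)]
  by blast

lemma (in ring) maximalideal_sum_eq_carrier:
  assumes M: "maximalideal M R" and N: "maximalideal N R" and "M \<noteq> N"
  shows "M <+>\<^bsub>R\<^esub> N = carrier R"
proof -
  have ideals: "ideal M R" "ideal N R" using M N maximalideal.axioms(1) by blast+
  have sum: "ideal (M <+>\<^bsub>R\<^esub> N) R" using add_ideals[OF ideals] .
  have "M \<union> N \<subseteq> carrier R"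
    using additive_subgroup.a_subset[OF ideal.axioms(1)] ideals by blast
  then have union: "M \<union> N \<subseteq> M <+>\<^bsub>R\<^esub> N"
    using genideal_self union_genideal[OF ideals] by metis
  have "M <+>\<^bsub>R\<^esub> N = M \<or> M <+>\<^bsub>R\<^esub> N = carrier R"
    using maximalideal.I_maximal[OF M sum] union additive_subgroup.a_subset[OF ideal.axioms(1)[OF sum]]
    by blast
  moreover have "\<not> N \<subseteq> M" using maximalideal_subset_imp_eq[OF N M] \<open>M \<noteq> N\<close> by blast
  ultimately show ?thesis using union by blast
qed

lemma (in cring) ex_notin_primeideal_in_ideals:
  assumes P: "primeideal P R" and "finite \<I>" and "\<forall>I\<in>\<I>. ideal I R \<and> \<not> I \<subseteq> P"
  shows "\<exists>x\<in>carrier R. x \<notin> P \<and> (\<forall>I\<in>\<I>. x \<in> I)"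
  using assms(2,3)
proof (induction \<I> rule: finite_induct)
  case empty
  have "\<one> \<notin> P"
    using primeideal.I_notcarr[OF P] ideal.one_imp_carrier[OF primeideal.axioms(1)[OF P]] by blast
  then show ?case by auto
next
  case (insert I \<I>)
  then obtain x where x: "x \<in> carrier R" "x \<notin> P" "\<forall>I\<in>\<I>. x \<in> I" by auto
  from insert.prems obtain b where b: "b \<in> I" "b \<notin> P" and I: "ideal I R" by auto
  have b_carr: "b \<in> carrier R" using ideal.Icarr[OF I b(1)] .
  have "x \<otimes> b \<notin> P" using primeideal.I_prime[OF P x(1) b_carr] x(2) b(2) by blast
  moreover have "x \<otimes> b \<in> I" using ideal.I_l_closed[OF I b(1) x(1)] .
  moreover have "x \<otimes> b \<in> I'" if "I' \<in> \<I>" for I'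
  proof -
    have "ideal I' R" using insert.prems that by blast
    then show ?thesis using ideal.I_r_closed[OF _ _ b_carr] x(3) that by blast
  qed
  moreover have "x \<otimes> b \<in> carrier R" using x(1) b_carr by simp
  ultimately show ?case by blast
qed

lemma (in cring) vnr_idempotent:
  assumes "von_neumann_regular R" and a: "a \<in> carrier R"
  obtains e where "e \<in> carrier R" "e \<in> PIdl a" "e \<otimes> e = e" "a \<otimes> e = a"
proof -
  obtain s where s: "s \<in> carrier R" "a = a \<otimes> a \<otimes> s"
    using assms unfolding von_neumann_regular_def by blast
  have "a \<otimes> (s \<otimes> a) = a \<otimes> a \<otimes> s" using s(1) a by (simp add: m_ac)
  also have "\<dots> = a" using s(2) by (rule sym)
  finally have ae: "a \<otimes> (s \<otimes> a) = a" .
  show ?thesis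
  proof (rule that)
    show "s \<otimes> a \<in> carrier R" using s(1) a by simp
    show "s \<otimes> a \<in> PIdl a" using s(1) unfolding cgenideal_def by blast
    have "(s \<otimes> a) \<otimes> (s \<otimes> a) = s \<otimes> (a \<otimes> (s \<otimes> a))" using s(1) a by (simp add: m_ac)
    also have "\<dots> = s \<otimes> a" by (simp only: ae)
    finally show "(s \<otimes> a) \<otimes> (s \<otimes> a) = s \<otimes> a" .
  qed (fact ae)
qed

lemma (in cring) vnr_primeideal_imp_maximalideal:
  assumes vnr: "von_neumann_regular R" and P: "primeideal P R"
  shows "maximalideal P R"
proof (rule maximalidealI)
  interpret primeideal P R by fact
  show "ideal P R" by (rule is_ideal)
  show "carrier R \<noteq> P" by (rule I_notcarr)
  fix J assume J: "ideal J R" "P \<subseteq> J" "J \<subseteq> carrier R"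
  show "J = P \<or> J = carrier R"
  proof (cases "J \<subseteq> P")
    case True
    then show ?thesis using J(2) by blast
  next
    case False
    then obtain a where a: "a \<in> J" "a \<notin> P" by blast
    have a_carr: "a \<in> carrier R" using a J by blast
    obtain e where e: "e \<in> carrier R" "e \<in> PIdl a" "a \<otimes> e = a"
      using vnr_idempotent[OF vnr a_carr] by blast
    have "a \<otimes> (\<one> \<ominus> e) = a \<ominus> a \<otimes> e" using a_carr e(1) by algebra
    then have "a \<otimes> (\<one> \<ominus> e) = \<zero>" using e(3) a_carr by (simp add: r_neg minus_eq)
    then have "\<one> \<ominus> e \<in> P" using I_prime[of a "\<one> \<ominus> e"] a_carr e(1) a(2) by auto
    moreover have "e \<in> J" using cgenideal_minimal[OF J(1) a(1)] e(2) by blast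
    ultimately show ?thesis using ideal.mem_and_one_minus_imp_carrier[OF J(1)] J(2) by blast
  qed
qed

lemma (in cring) vnr_min_primes_eq_maximalideals:
  assumes vnr: "von_neumann_regular R"
  shows "min_primes R = {M. maximalideal M R}"
proof (intro Set.set_eqI iffI CollectI)
  fix P assume "P \<in> min_primes R"
  then show "maximalideal P R"
    using vnr_primeideal_imp_maximalideal[OF vnr] unfolding min_primes_def by blast
next
  fix M assume "M \<in> {M. maximalideal M R}"
  then show "M \<in> min_primes R"
    using maximalideal_prime vnr_primeideal_imp_maximalideal[OF vnr] maximalideal_subset_imp_eq
    unfolding min_primes_def by blast
qed

lemma (in cring) vnr_ex_maximalideal_notin:
  assumes vnr: "von_neumann_regular R" and a: "a \<in> carrier R" "a \<noteq> \<zero>"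
  shows "\<exists>M. maximalideal M R \<and> a \<notin> M"
proof -
  obtain e where e: "e \<in> carrier R" "e \<in> PIdl a" "e \<otimes> e = e" "a \<otimes> e = a"
    using vnr_idempotent[OF vnr a(1)] by blast
  have "\<one> \<notin> PIdl (\<one> \<ominus> e)"
  proof
    assume "\<one> \<in> PIdl (\<one> \<ominus> e)"
    then obtain x where x: "x \<in> carrier R" "\<one> = x \<otimes> (\<one> \<ominus> e)" unfolding cgenideal_def by blast
    have "e = e \<otimes> (x \<otimes> (\<one> \<ominus> e))" using x e(1) by (metis r_one)
    also have "\<dots> = x \<otimes> (e \<ominus> e \<otimes> e)" using x(1) e(1) by algebra
    also have "\<dots> = \<zero>" using e(1,3) x(1) by algebra
    finally have "a = \<zero>" using e(4) a(1) by simp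
    then show False using a(2) by blast
  qed
  then obtain M where M: "maximalideal M R" "PIdl (\<one> \<ominus> e) \<subseteq> M"
    using ex_maximalideal_superset[OF cgenideal_ideal] e(1) by blast
  have M_ideal: "ideal M R" using M(1) maximalideal.axioms(1) by blast
  have "a \<notin> M"
  proof
    assume "a \<in> M"
    then have "e \<in> M" using cgenideal_minimal[OF M_ideal] e(2) by blast
    moreover have "\<one> \<ominus> e \<in> M" using M(2) cgenideal_self e(1) by blast
    ultimately show False
      using maximalideal.I_notcarr[OF M(1)] ideal.mem_and_one_minus_imp_carrier[OF M_ideal] by simp
  qed
  then show ?thesis using M(1) by blast
qed

lemma (in cring) vnr_Inter_maximalideals:
  assumes vnr: "von_neumann_regular R" and "\<one> \<noteq> \<zero>"
  shows "\<Inter>{M. maximalideal M R} = {\<zero>}"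
proof
  obtain M0 where M0: "maximalideal M0 R" using ex_maximalideal assms(2) by blast
  show "\<Inter>{M. maximalideal M R} \<subseteq> {\<zero>}"
  proof
    fix a assume a: "a \<in> \<Inter>{M. maximalideal M R}"
    then have "a \<in> carrier R" using M0 ideal.Icarr[OF maximalideal.axioms(1)[OF M0]] by blast
    then show "a \<in> {\<zero>}" using a vnr_ex_maximalideal_notin[OF vnr] by blast
  qed
  show "{\<zero>} \<subseteq> \<Inter>{M. maximalideal M R}"
    using maximalideal.axioms(1) additive_subgroup.zero_closed[OF ideal.axioms(1)] by blast
qed

lemma cozero_clique_number_finiteE:
  assumes "cozero_clique_number R < \<infinity>"
  obtains N :: nat where "\<And>S. cozero_clique R S \<Longrightarrow> finite S \<and> card S \<le> N"
proof -
  have no_infinite: "\<not> (\<exists>S. cozero_clique R S \<and> infinite S)"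
    using assms unfolding cozero_clique_number_def by (auto split: if_splits)
  define Xs where "Xs = {enat (card S) | S. cozero_clique R S}"
  have "Sup Xs < \<infinity>" using assms no_infinite unfolding cozero_clique_number_def Xs_def by simp
  then obtain N where N: "Sup Xs = enat N" by (cases "Sup Xs") auto
  have "finite S \<and> card S \<le> N" if S: "cozero_clique R S" for S
  proof -
    have "enat (card S) \<le> Sup Xs" using S unfolding Xs_def by (blast intro: Sup_upper)
    then show ?thesis using N no_infinite S by auto
  qed
  then show ?thesis using that by blast
qed

lemma (in ring) nonzero_nonunitsI:
  assumes I: "ideal I R" "x \<notin> I" and J: "ideal J R" "J \<noteq> carrier R" "x \<in> J"
  shows "x \<in> nonzero_nonunits R"
proof -
  have "\<zero> \<in> I" using additive_subgroup.zero_closed[OF ideal.axioms(1)[OF I(1)]] .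
  then have "x \<noteq> \<zero>" using I(2) by blast
  moreover have "x \<notin> Units R"
  proof
    assume "x \<in> Units R"
    then show False using ideal.Units_in_imp_carrier[OF J(1) _ J(3)] J(2) by simp
  qed
  moreover have "x \<in> carrier R" using ideal.Icarr[OF J(1,3)] .
  ultimately show ?thesis unfolding nonzero_nonunits_def by blast
qed

lemma (in ring) cozero_adjI:
  assumes "a \<in> nonzero_nonunits R" "b \<in> nonzero_nonunits R"
    and "ideal I R" "a \<notin> I" "b \<in> I"
    and "ideal J R" "b \<notin> J" "a \<in> J"
  shows "cozero_adj R a b"
proof -
  have "a \<notin> PIdl b" using cgenideal_minimal[OF assms(3,5)] assms(4) by blast
  moreover have "b \<notin> PIdl a" using cgenideal_minimal[OF assms(6,8)] assms(7) by blast
  moreover have "a \<noteq> b" using assms(4,5) by blast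
  ultimately show ?thesis using assms(1,2) unfolding cozero_adj_def by simp
qed

lemma (in cring) cozero_clique_of_maximalideals:
  assumes T: "finite T" "2 \<le> card T" "\<forall>M\<in>T. maximalideal M R"
  shows "\<exists>S. cozero_clique R S \<and> card S = card T"
proof -
  have ideal: "ideal M R" if "M \<in> T" for M
    using maximalideal.axioms(1) T(3) that by blast
  have proper: "M \<noteq> carrier R" if "M \<in> T" for M
    using maximalideal.I_notcarr T(3) that by fastforce
  have "\<exists>x. x \<notin> M \<and> (\<forall>M'\<in>T - {M}. x \<in> M')" if M: "M \<in> T" for M
  proof -
    have "ideal M' R \<and> \<not> M' \<subseteq> M" if M': "M' \<in> T - {M}" for M'
      using ideal[of M'] maximalideal_subset_imp_eq[of M' R M] T(3) M M' by auto
    moreover have "primeideal M R" using maximalideal_prime T(3) M by blast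
    ultimately show ?thesis using ex_notin_primeideal_in_ideals[of M "T - {M}"] T(1) by blast
  qed
  then obtain x where x_notin: "\<And>M. M \<in> T \<Longrightarrow> x M \<notin> M"
    and x_in: "\<And>M M'. M \<in> T \<Longrightarrow> M' \<in> T \<Longrightarrow> M' \<noteq> M \<Longrightarrow> x M \<in> M'"
    by (metis Diff_iff singletonD)
  have other: "\<exists>M'\<in>T. M' \<noteq> M" if "M \<in> T" for M
  proof (rule ccontr)
    assume "\<not> ?thesis"
    then have "T \<subseteq> {M}" by blast
    then have "card T \<le> 1" using card_mono[of "{M}" T] by simp
    then show False using T(2) by simp
  qed
  have nonzero_nonunit: "x M \<in> nonzero_nonunits R" if M: "M \<in> T" for M
  proof -
    obtain M' where M': "M' \<in> T" "M' \<noteq> M" using other[OF M] by blast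
    show ?thesis
      using nonzero_nonunitsI[OF ideal[OF M] x_notin[OF M] ideal[OF M'(1)] proper[OF M'(1)]]
        x_in[OF M M'] .
  qed
  have "cozero_adj R (x M) (x M')" if M: "M \<in> T" and M': "M' \<in> T" and "M \<noteq> M'" for M M'
    using cozero_adjI[OF nonzero_nonunit[OF M] nonzero_nonunit[OF M'] ideal[OF M] x_notin[OF M]
        x_in[OF M' M] ideal[OF M'] x_notin[OF M'] x_in[OF M M']] \<open>M \<noteq> M'\<close> by blast
  then have "cozero_clique R (x ` T)"
    unfolding cozero_clique_def using nonzero_nonunit by auto
  moreover have "inj_on x T"
    using x_notin x_in by (intro inj_onI) metis
  ultimately show ?thesis using card_image by blast
qed

lemma (in cring) finite_maximalideals:
  assumes "cozero_clique_number R < \<infinity>"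
  shows "finite {M. maximalideal M R}"
proof (rule ccontr)
  obtain N where N: "\<And>S. cozero_clique R S \<Longrightarrow> finite S \<and> card S \<le> N"
    using cozero_clique_number_finiteE[OF assms] by blast
  assume "infinite {M. maximalideal M R}"
  then obtain T where T: "finite T" "card T = N + 2" "T \<subseteq> {M. maximalideal M R}"
    using infinite_arbitrarily_large by blast
  have "2 \<le> card T" and "\<forall>M\<in>T. maximalideal M R" using T(2,3) by auto
  then obtain S where "cozero_clique R S" "card S = N + 2"
    using cozero_clique_of_maximalideals[OF T(1)] T(2) by metis
  then have "N + 2 \<le> N" using N by metis
  then show False by simp
qed

lemma (in cring) iso_RDirProd_list_residue_fields:
  assumes "finite \<M>" "\<M> \<noteq> {}" "\<forall>M\<in>\<M>. maximalideal M R" "\<Inter>\<M> = {\<zero>}"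
  shows "\<exists>Fs :: 'a set ring list.
    (\<forall>F\<in>set Fs. field F) \<and> length Fs = card \<M> \<and> R \<simeq> RDirProd_list Fs"
proof -
  obtain Ms where Ms: "set Ms = \<M>" "distinct Ms"
    using finite_distinct_list[OF assms(1)] by blast
  then obtain n where n: "length Ms = Suc n"
    using assms(2) by (cases Ms) auto
  have indices: "nth Ms ` {..n} = \<M>"
    using nth_image[of "length Ms" Ms] Ms(1) n by (simp add: atLeast0LessThan lessThan_Suc_atMost)
  have max: "maximalideal (Ms ! i) R" if "i \<le> n" for i
    using assms(3) indices that by blast
  have "R Quot (\<Inter>i \<le> n. Ms ! i) \<simeq> RDirProd_list (map (\<lambda>i. R Quot (Ms ! i)) [0..< Suc n])"
  proof (rule chinese_remainder)
    show "ideal (Ms ! i) R" if "i \<le> n" for i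
      using maximalideal.axioms(1)[OF max[OF that]] .
    show "Ms ! i <+>\<^bsub>R\<^esub> Ms ! j = carrier R" if "i \<le> n" "j \<le> n" "i \<noteq> j" for i j
    proof (rule maximalideal_sum_eq_carrier[OF max[OF that(1)] max[OF that(2)]])
      show "Ms ! i \<noteq> Ms ! j" using nth_eq_iff_index_eq[OF Ms(2)] that n by simp
    qed
  qed
  moreover have "map (\<lambda>i. R Quot (Ms ! i)) [0..< Suc n] = map (\<lambda>M. R Quot M) Ms"
  proof -
    have "map (\<lambda>i. R Quot (Ms ! i)) [0..< Suc n] =
        map (\<lambda>M. R Quot M) (map (\<lambda>i. Ms ! i) [0..< length Ms])"
      by (simp only: map_map comp_def n)
    then show ?thesis by (simp only: map_nth)
  qed
  ultimately have "R Quot {\<zero>} \<simeq> RDirProd_list (map (\<lambda>M. R Quot M) Ms)"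
    using indices assms(4) by simp
  then have iso: "R \<simeq> RDirProd_list (map (\<lambda>M. R Quot M) Ms)"
    using ring_iso_trans[OF FactRing_zeroideal(2)] by blast
  show ?thesis
  proof (intro exI conjI)
    show "\<forall>F\<in>set (map (\<lambda>M. R Quot M) Ms). field F"
      using maximalideal.quotient_is_field assms(3) Ms(1) is_cring by auto
    show "length (map (\<lambda>M. R Quot M) Ms) = card \<M>"
      using distinct_card[OF Ms(2)] Ms(1) by simp
  qed (fact iso)
qed

theorem lemma2p2:
  fixes R :: "('a, 'm) ring_scheme"
  assumes "cring R"
    and "\<one>\<^bsub>R\<^esub> \<noteq> \<zero>\<^bsub>R\<^esub>"
    and "von_neumann_regular R"
    and "cozero_clique_number R < \<infinity>"
  shows "finite (min_primes R) \<and>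
    (\<exists>Fs :: 'a set ring list. (\<forall>F\<in>set Fs. field F) \<and> length Fs = card (min_primes R)
        \<and> R \<simeq> RDirProd_list Fs)"
proof -
  interpret cring R by fact
  have min_primes: "min_primes R = {M. maximalideal M R}"
    using vnr_min_primes_eq_maximalideals assms(3) .
  have finite: "finite {M. maximalideal M R}"
    using finite_maximalideals assms(4) .
  obtain M where "maximalideal M R" using ex_maximalideal assms(2) by blast
  then have nonempty: "{M. maximalideal M R} \<noteq> {}" by blast
  have Inter: "\<Inter>{M. maximalideal M R} = {\<zero>\<^bsub>R\<^esub>}"
    using vnr_Inter_maximalideals assms(3,2) .
  obtain Fs :: "'a set ring list" where "\<forall>F\<in>set Fs. field F"
    and "length Fs = card {M. maximalideal M R}" and "R \<simeq> RDirProd_list Fs"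
    using iso_RDirProd_list_residue_fields[OF finite nonempty _ Inter] by blast
  then show ?thesis using finite unfolding min_primes by blast
qed

end
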